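(* Let $\alpha,\beta,\lambda,\varepsilon_1,\varepsilon_2$ be positive real numbers and consider the planar system $$s'=s\big(\varepsilon_2-\beta-\varepsilon_2 s+(\varepsilon_1-\varepsilon_2-\lambda)i\big),\qquad i'=i\big(\varepsilon_2-\varepsilon_1-\alpha+(\lambda-\varepsilon_2)s+(\varepsilon_1-\varepsilon_2)i\big)$$ on $D_1=\{(s,i): s\ge0,\ i\ge0,\ s+i\le1\}$. Let $T_0=\varepsilon_2-\beta$ and $T_1=\varepsilon_2-\varepsilon_1-\alpha$. If $T_0<0$ and $T_1<0$, then the origin is the only rest point of this system in $D_1$.
   Context: This is the special case $b=\beta_1=\gamma=0$ (with $\beta=\beta_2$) of the SIRS proportions system reduced to the $(s,i)$-plane. *)

theory Defs
  imports Complex_Main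
begin

definition sirs_s :: "real \<Rightarrow> real \<Rightarrow> real \<Rightarrow> real \<Rightarrow> real \<Rightarrow> real \<Rightarrow> real \<Rightarrow> real" where
  "sirs_s \<alpha> \<beta> lam \<epsilon>1 \<epsilon>2 s i = s * (\<epsilon>2 - \<beta> - \<epsilon>2 * s + (\<epsilon>1 - \<epsilon>2 - lam) * i)"

definition sirs_i :: "real \<Rightarrow> real \<Rightarrow> real \<Rightarrow> real \<Rightarrow> real \<Rightarrow> real \<Rightarrow> real \<Rightarrow> real" where
  "sirs_i \<alpha> \<beta> lam \<epsilon>1 \<epsilon>2 s i = i * (\<epsilon>2 - \<epsilon>1 - \<alpha> + (lam - \<epsilon>2) * s + (\<epsilon>1 - \<epsilon>2) * i)"

definition D1 :: "(real \<times> real) set" where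
  "D1 = {(s, i). s \<ge> 0 \<and> i \<ge> 0 \<and> s + i \<le> 1}"

definition rest_point :: "real \<Rightarrow> real \<Rightarrow> real \<Rightarrow> real \<Rightarrow> real \<Rightarrow> real \<times> real \<Rightarrow> bool" where
  "rest_point \<alpha> \<beta> lam \<epsilon>1 \<epsilon>2 p \<longleftrightarrow>
     sirs_s \<alpha> \<beta> lam \<epsilon>1 \<epsilon>2 (fst p) (snd p) = 0 \<and> sirs_i \<alpha> \<beta> lam \<epsilon>1 \<epsilon>2 (fst p) (snd p) = 0"

end

theory Submission
  imports Defs
begin

text \<open>
  With \<open>r = 1 - s - i \<in> [0, 1]\<close> and \<open>\<kappa> = lam - \<epsilon>1\<close> the field reads
  \<open>s' = s (a - \<kappa> i)\<close>, \<open>i' = i (b + \<kappa> s)\<close> with \<open>a = \<epsilon>2 r - \<beta>\<close>, \<open>b = (\<epsilon>2 - \<epsilon>1) r - \<alpha>\<close>.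
  On \<open>D1\<close> the hypotheses \<open>T0 < 0\<close>, \<open>T1 < 0\<close> force \<open>a, b < 0\<close>. At a rest point with \<open>s > 0\<close>
  we get \<open>\<kappa> i = a < 0\<close>, so \<open>i > 0\<close> and \<open>\<kappa> s = -b > 0\<close>: the sign of \<open>\<kappa>\<close> is contradictory.
  Hence \<open>s = 0\<close>, and then \<open>i b = 0\<close> gives \<open>i = 0\<close>.
\<close>

lemma mult_unit_interval_less:
  fixes c r b :: real
  assumes "0 \<le> r" "r \<le> 1" "c < b" "0 < b"
  shows "c * r < b"
proof (cases "c \<ge> 0")
  case True
  then have "c * r \<le> c" using assms by (simp add: mult_left_le)
  then show ?thesis using assms by linarith
next
  case False
  then have "c * r \<le> 0" using assms by (simp add: mult_nonpos_nonneg)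
  then show ?thesis using assms by linarith
qed

lemma rest_point_zero_if_rates_neg:
  fixes a b \<kappa> s i :: real
  assumes "a < 0" "b < 0" "0 \<le> s" "0 \<le> i"
    and rest_s: "s * (a - \<kappa> * i) = 0" and rest_i: "i * (b + \<kappa> * s) = 0"
  shows "s = 0 \<and> i = 0"
proof -
  have "s = 0"
  proof (rule ccontr)
    assume "s \<noteq> 0"
    with rest_s have "\<kappa> * i = a" by simp
    with \<open>a < 0\<close> \<open>0 \<le> i\<close> have "i > 0" "\<kappa> < 0"
      by (auto simp: mult_less_0_iff)
    with rest_i have "\<kappa> * s = - b" by simp
    with \<open>b < 0\<close> \<open>0 \<le> s\<close> \<open>\<kappa> < 0\<close> show False
      by (smt (verit) mult_nonpos_nonneg)
  qed
  with rest_i \<open>b < 0\<close> show ?thesis by simp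
qed

lemma sirs_s_eq:
  "sirs_s \<alpha> \<beta> lam \<epsilon>1 \<epsilon>2 s i = s * ((\<epsilon>2 * (1 - s - i) - \<beta>) - (lam - \<epsilon>1) * i)"
  by (simp add: sirs_s_def algebra_simps)

lemma sirs_i_eq:
  "sirs_i \<alpha> \<beta> lam \<epsilon>1 \<epsilon>2 s i = i * (((\<epsilon>2 - \<epsilon>1) * (1 - s - i) - \<alpha>) + (lam - \<epsilon>1) * s)"
  by (simp add: sirs_i_def algebra_simps)

theorem proposition3p1:
  fixes \<alpha> \<beta> lam \<epsilon>1 \<epsilon>2 :: real
  assumes "\<alpha> > 0" "\<beta> > 0" "lam > 0" "\<epsilon>1 > 0" "\<epsilon>2 > 0"
    and "\<epsilon>2 - \<beta> < 0" and "\<epsilon>2 - \<epsilon>1 - \<alpha> < 0"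
  shows "{p \<in> D1. rest_point \<alpha> \<beta> lam \<epsilon>1 \<epsilon>2 p} = {(0, 0)}"
proof
  show "{(0, 0)} \<subseteq> {p \<in> D1. rest_point \<alpha> \<beta> lam \<epsilon>1 \<epsilon>2 p}"
    by (simp add: D1_def rest_point_def sirs_s_def sirs_i_def)
  show "{p \<in> D1. rest_point \<alpha> \<beta> lam \<epsilon>1 \<epsilon>2 p} \<subseteq> {(0, 0)}"
  proof clarify
    fix s i
    assume "(s, i) \<in> D1" and rest: "rest_point \<alpha> \<beta> lam \<epsilon>1 \<epsilon>2 (s, i)"
    then have "0 \<le> s" "0 \<le> i" "0 \<le> 1 - s - i" "1 - s - i \<le> 1"
      by (auto simp: D1_def)
    then have a_neg: "\<epsilon>2 * (1 - s - i) - \<beta> < 0"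
      and b_neg: "(\<epsilon>2 - \<epsilon>1) * (1 - s - i) - \<alpha> < 0"
      using assms mult_unit_interval_less[of "1 - s - i"] by (auto simp del: diff_diff_eq)
    from rest show "s = 0 \<and> i = 0"
      unfolding rest_point_def sirs_s_eq sirs_i_eq fst_conv snd_conv
      by (intro rest_point_zero_if_rates_neg[OF a_neg b_neg \<open>0 \<le> s\<close> \<open>0 \<le> i\<close>]) auto
  qed
qed

end
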